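(* Let $G=(V,E)$ be a finite connected graph and let $x,y,v,w\in V$. Suppose there is a nonempty set $C\subseteq V$ with diameter $D=\max_{c,c'\in C} d(c,c')$ such that, for every two vertices $a,b\in\{x,y,v,w\}$, every shortest path between $a$ and $b$ contains a vertex of $C$. Then $\delta(x,y,v,w)\le D$.
   Context: $G$ is an undirected graph in which every edge has length $1$, and $d(a,b)$ denotes the shortest-path distance between vertices $a,b$. For vertices $x,y,v,w$, the hyperbolicity $\delta(x,y,v,w)$ of the $4$-tuple is defined as half the difference between the largest and the second largest of the three sums $d(x,y)+d(v,w)$, $d(x,v)+d(y,w)$, $d(x,w)+d(y,v)$ (if the two largest coincide, $\delta=0$). *)

theory Defs
  imports Complex_Main
begin

definition is_graph :: "'a set \<Rightarrow> ('a \<Rightarrow> 'a \<Rightarrow> bool) \<Rightarrow> bool" where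
  "is_graph V E \<longleftrightarrow> finite V \<and> (\<forall>a b. E a b \<longrightarrow> a \<in> V \<and> b \<in> V)
     \<and> (\<forall>a b. E a b \<longrightarrow> E b a) \<and> (\<forall>a. \<not> E a a)"

definition is_path :: "('a \<Rightarrow> 'a \<Rightarrow> bool) \<Rightarrow> 'a \<Rightarrow> 'a \<Rightarrow> 'a list \<Rightarrow> bool" where
  "is_path E a b p \<longleftrightarrow> p \<noteq> [] \<and> hd p = a \<and> last p = b
     \<and> (\<forall>i. Suc i < length p \<longrightarrow> E (p ! i) (p ! Suc i))"

definition connected_graph :: "'a set \<Rightarrow> ('a \<Rightarrow> 'a \<Rightarrow> bool) \<Rightarrow> bool" where
  "connected_graph V E \<longleftrightarrow> (\<forall>a\<in>V. \<forall>b\<in>V. \<exists>p. is_path E a b p)"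

definition gdist :: "('a \<Rightarrow> 'a \<Rightarrow> bool) \<Rightarrow> 'a \<Rightarrow> 'a \<Rightarrow> nat" where
  "gdist E a b = (LEAST n. \<exists>p. is_path E a b p \<and> length p = Suc n)"

definition shortest_path :: "('a \<Rightarrow> 'a \<Rightarrow> bool) \<Rightarrow> 'a \<Rightarrow> 'a \<Rightarrow> 'a list \<Rightarrow> bool" where
  "shortest_path E a b p \<longleftrightarrow> is_path E a b p \<and> length p = Suc (gdist E a b)"

text \<open>Hyperbolicity of a 4-tuple: half of (largest - second largest) of the three sums.\<close>
definition hyp_delta :: "('a \<Rightarrow> 'a \<Rightarrow> bool) \<Rightarrow> 'a \<Rightarrow> 'a \<Rightarrow> 'a \<Rightarrow> 'a \<Rightarrow> real" where
  "hyp_delta E x y v w =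
    (let s1 = real (gdist E x y + gdist E v w);
         s2 = real (gdist E x v + gdist E y w);
         s3 = real (gdist E x w + gdist E y v);
         l1 = max s1 (max s2 s3);
         l2 = s1 + s2 + s3 - l1 - min s1 (min s2 s3)
     in (l1 - l2) / 2)"

end

theory Submission
  imports Defs
begin

text \<open>Write \<open>r a\<close> for the distance from \<open>a\<close> to \<open>C\<close>. A shortest \<open>a\<close>--\<open>b\<close> path passes through
  \<open>C\<close>, so \<open>r a + r b \<le> d(a,b)\<close>; going from \<open>a\<close> to a nearest point of \<open>C\<close>, across \<open>C\<close> and on to \<open>b\<close>
  gives \<open>d(a,b) \<le> r a + r b + D\<close>. Hence for four distinct points all three pair sums lie in
  \<open>[R, R + 2D]\<close> with \<open>R = r x + r y + r v + r w\<close>, so the two largest differ by at most \<open>2D\<close>.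
  If two of the points coincide, the triangle inequality already makes the two largest sums equal.\<close>

lemma is_path_take:
  assumes "is_path E a b p" "i < length p"
  shows "is_path E a (p ! i) (take (Suc i) p)"
  using assms by (auto simp: is_path_def hd_take last_conv_nth)

lemma is_path_drop:
  assumes "is_path E a b p" "i < length p"
  shows "is_path E (p ! i) b (drop i p)"
  using assms by (auto simp: is_path_def hd_drop_conv_nth)

lemma is_path_rev:
  assumes "symp E" "is_path E a b p"
  shows "is_path E b a (rev p)"
  unfolding is_path_def
proof (intro conjI allI impI)
  show "rev p \<noteq> []" "hd (rev p) = b" "last (rev p) = a"
    using assms(2) by (auto simp: is_path_def hd_rev last_rev)
  fix j assume j: "Suc j < length (rev p)"
  define k where "k = length p - Suc (Suc j)"
  have "E (p ! k) (p ! Suc k)"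
    using assms(2) j by (simp add: is_path_def k_def)
  moreover have "rev p ! j = p ! Suc k" "rev p ! Suc j = p ! k"
    using j by (auto simp: rev_nth k_def Suc_diff_Suc)
  ultimately show "E (rev p ! j) (rev p ! Suc j)"
    using assms(1) by (simp add: symp_def)
qed

lemma is_path_append:
  assumes p: "is_path E a b p" and q: "is_path E b c q"
  shows "is_path E a c (butlast p @ q)"
  unfolding is_path_def
proof (intro conjI allI impI)
  have p_eq: "butlast p @ q = p @ tl q"
    using p q by (auto simp: is_path_def) (metis append_butlast_last_id append_Cons append_assoc append_Nil list.collapse)
  show "butlast p @ q \<noteq> []" "last (butlast p @ q) = c"
    using q by (auto simp: is_path_def)
  show "hd (butlast p @ q) = a"
    using p unfolding p_eq by (auto simp: is_path_def)
  fix i assume i: "Suc i < length (butlast p @ q)"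
  show "E ((butlast p @ q) ! i) ((butlast p @ q) ! Suc i)"
  proof (cases "Suc i < length p")
    case True
    then show ?thesis
      using p unfolding p_eq by (simp add: is_path_def nth_append)
  next
    case False
    then have "Suc (i - length (butlast p)) < length q" "Suc i - length (butlast p) = Suc (i - length (butlast p))"
      using i by auto
    then show ?thesis
      using q False by (auto simp: is_path_def nth_append)
  qed
qed

lemma gdist_le_length: "is_path E a b p \<Longrightarrow> gdist E a b \<le> length p - 1"
  unfolding gdist_def by (rule Least_le) (auto simp: is_path_def)

lemma shortest_path_exists:
  assumes "is_path E a b p"
  obtains q where "shortest_path E a b q"
proof -
  have "\<exists>q. is_path E a b q \<and> length q = Suc (gdist E a b)"
    unfolding gdist_def
    by (rule LeastI[of _ "length p - 1"]) (use assms in \<open>auto simp: is_path_def\<close>)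
  then show ?thesis
    using that by (auto simp: shortest_path_def)
qed

lemma gdist_self: "gdist E a a = 0"
  using gdist_le_length[of E a a "[a]"] by (simp add: is_path_def)

lemma gdist_triangle:
  assumes "is_path E a b p" "is_path E b c q"
  shows "gdist E a c \<le> gdist E a b + gdist E b c"
proof -
  obtain p' q' where "shortest_path E a b p'" "shortest_path E b c q'"
    using assms shortest_path_exists by metis
  then show ?thesis
    using gdist_le_length[OF is_path_append] by (fastforce simp: shortest_path_def)
qed

lemma gdist_commute:
  assumes "symp E" "is_path E a b p"
  shows "gdist E a b = gdist E b a"
proof -
  have le: "gdist E b a \<le> gdist E a b" if path: "is_path E a b p" for a b p
  proof -
    obtain q where "shortest_path E a b q"
      using shortest_path_exists[OF path] by blast
    then show ?thesis
      using gdist_le_length[OF is_path_rev[OF assms(1)]] by (fastforce simp: shortest_path_def)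
  qed
  show ?thesis
    using le[OF assms(2)] le[OF is_path_rev[OF assms]] by simp
qed

lemma connected_graph_path:
  "connected_graph V E \<Longrightarrow> a \<in> V \<Longrightarrow> b \<in> V \<Longrightarrow> \<exists>p. is_path E a b p"
  by (simp add: connected_graph_def)

lemma is_graph_symp: "is_graph V E \<Longrightarrow> symp E"
  by (simp add: is_graph_def symp_def)

lemma connected_graph_gdist_triangle:
  "connected_graph V E \<Longrightarrow> a \<in> V \<Longrightarrow> b \<in> V \<Longrightarrow> c \<in> V
    \<Longrightarrow> gdist E a c \<le> gdist E a b + gdist E b c"
  by (meson connected_graph_path gdist_triangle)

lemma connected_graph_gdist_commute:
  "is_graph V E \<Longrightarrow> connected_graph V E \<Longrightarrow> a \<in> V \<Longrightarrow> b \<in> V \<Longrightarrow> gdist E a b = gdist E b a"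
  by (meson connected_graph_path gdist_commute is_graph_symp)

definition gdist_set :: "('a \<Rightarrow> 'a \<Rightarrow> bool) \<Rightarrow> 'a \<Rightarrow> 'a set \<Rightarrow> nat" where
  "gdist_set E a C = Min (gdist E a ` C)"

lemma gdist_set_le: "finite C \<Longrightarrow> c \<in> C \<Longrightarrow> gdist_set E a C \<le> gdist E a c"
  by (simp add: gdist_set_def)

lemma gdist_set_attained:
  assumes "finite C" "C \<noteq> {}"
  obtains c where "c \<in> C" "gdist_set E a C = gdist E a c"
proof -
  have "gdist_set E a C \<in> gdist E a ` C"
    unfolding gdist_set_def using assms by (intro Min_in) auto
  then show ?thesis
    using that by blast
qed

lemma gdist_set_add_le_gdist:
  assumes "symp E" "finite C" "is_path E a b p"
    and meets: "\<forall>q. shortest_path E a b q \<longrightarrow> (\<exists>c\<in>C. c \<in> set q)"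
  shows "gdist_set E a C + gdist_set E b C \<le> gdist E a b"
proof -
  obtain q where q: "shortest_path E a b q"
    using shortest_path_exists[OF assms(3)] by blast
  then obtain c where "c \<in> C" "c \<in> set q"
    using meets by blast
  then obtain i where i: "i < length q" "q ! i = c"
    by (meson in_set_conv_nth)
  have q_path: "is_path E a b q" and q_len: "length q = Suc (gdist E a b)"
    using q by (auto simp: shortest_path_def)
  have "gdist E a c \<le> i"
    using gdist_le_length[OF is_path_take[OF q_path i(1)]] i by simp
  moreover have "gdist E b c = gdist E c b"
    using gdist_commute[OF assms(1) is_path_drop[OF q_path i(1)]] i by simp
  moreover have "gdist E c b \<le> length q - 1 - i"
    using gdist_le_length[OF is_path_drop[OF q_path i(1)]] i by simp
  moreover have "gdist_set E a C \<le> gdist E a c" "gdist_set E b C \<le> gdist E b c"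
    using gdist_set_le[OF assms(2) \<open>c \<in> C\<close>] by auto
  ultimately show ?thesis
    using q_len i(1) by linarith
qed

lemma gdist_le_gdist_set_add:
  assumes "is_graph V E" "connected_graph V E" "C \<subseteq> V" "finite C" "C \<noteq> {}" "a \<in> V" "b \<in> V"
    and diam: "\<forall>c\<in>C. \<forall>c'\<in>C. gdist E c c' \<le> D"
  shows "gdist E a b \<le> gdist_set E a C + gdist_set E b C + D"
proof -
  obtain c where c: "c \<in> C" "gdist_set E a C = gdist E a c"
    using gdist_set_attained[OF assms(4,5)] by metis
  obtain c' where c': "c' \<in> C" "gdist_set E b C = gdist E b c'"
    using gdist_set_attained[OF assms(4,5)] by metis
  have "c \<in> V" "c' \<in> V"
    using c c' assms(3) by auto
  have "gdist E a b \<le> gdist E a c + gdist E c b"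
    using connected_graph_gdist_triangle[OF assms(2)] \<open>c \<in> V\<close> assms(6,7) by blast
  also have "gdist E c b \<le> gdist E c c' + gdist E c' b"
    using connected_graph_gdist_triangle[OF assms(2)] \<open>c \<in> V\<close> \<open>c' \<in> V\<close> assms(7) by blast
  also have "gdist E c' b = gdist E b c'"
    using connected_graph_gdist_commute[OF assms(1,2)] \<open>c' \<in> V\<close> assms(7) by blast
  finally show ?thesis
    using c c' diam by fastforce
qed

definition half_top_gap :: "real \<Rightarrow> real \<Rightarrow> real \<Rightarrow> real" where
  "half_top_gap s1 s2 s3 =
     (max s1 (max s2 s3) - (s1 + s2 + s3 - max s1 (max s2 s3) - min s1 (min s2 s3))) / 2"

lemma hyp_delta_eq_half_top_gap:
  "hyp_delta E x y v w =
     half_top_gap (real (gdist E x y + gdist E v w)) (real (gdist E x v + gdist E y w))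
       (real (gdist E x w + gdist E y v))"
  by (simp add: hyp_delta_def half_top_gap_def Let_def)

lemma half_top_gap_le:
  assumes "s1 \<le> s2 + 2 * D \<or> s1 \<le> s3 + 2 * D" "s2 \<le> s1 + 2 * D \<or> s2 \<le> s3 + 2 * D"
    "s3 \<le> s1 + 2 * D \<or> s3 \<le> s2 + 2 * D"
  shows "half_top_gap s1 s2 s3 \<le> D"
  using assms unfolding half_top_gap_def max_def min_def by auto

lemma half_top_gap_le_of_interval:
  assumes "R \<le> s1" "s1 \<le> R + 2 * D" "R \<le> s2" "s2 \<le> R + 2 * D" "R \<le> s3" "s3 \<le> R + 2 * D"
  shows "half_top_gap s1 s2 s3 \<le> D"
  using assms by (intro half_top_gap_le) auto

lemma hyp_delta_nonpos_if_not_distinct: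
  assumes "is_graph V E" "connected_graph V E" "x \<in> V" "y \<in> V" "v \<in> V" "w \<in> V"
    and "\<not> distinct [x, y, v, w]"
  shows "hyp_delta E x y v w \<le> 0"
proof -
  note tri = connected_graph_gdist_triangle[OF assms(2)]
    and sym = connected_graph_gdist_commute[OF assms(1,2)]
  note V = assms(3-6)
  consider "x = y" | "v = w" | "x = v" | "y = w" | "x = w" | "y = v"
    using assms(7) by auto
  then show ?thesis
  proof cases
    case 1
    then show ?thesis
      using tri[of v x w] sym[of x v] V
      unfolding hyp_delta_eq_half_top_gap by (intro half_top_gap_le) (auto simp: gdist_self)
  next
    case 2
    then show ?thesis
      using tri[of x v y] sym[of y v] V
      unfolding hyp_delta_eq_half_top_gap by (intro half_top_gap_le) (auto simp: gdist_self)
  next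
    case 3
    then show ?thesis
      using tri[of y x w] sym[of x y] V
      unfolding hyp_delta_eq_half_top_gap by (intro half_top_gap_le) (auto simp: gdist_self)
  next
    case 4
    then show ?thesis
      using tri[of x y v] sym[of v y] V
      unfolding hyp_delta_eq_half_top_gap by (intro half_top_gap_le) (auto simp: gdist_self)
  next
    case 5
    then show ?thesis
      using tri[of y x v] sym[of x y] sym[of v x] V
      unfolding hyp_delta_eq_half_top_gap by (intro half_top_gap_le) (auto simp: gdist_self)
  next
    case 6
    then show ?thesis
      using tri[of x y w] V
      unfolding hyp_delta_eq_half_top_gap by (intro half_top_gap_le) (auto simp: gdist_self)
  qed
qed

lemma hyp_delta_le_if_distinct:
  fixes r :: "'a \<Rightarrow> nat"
  assumes "distinct [x, y, v, w]"
    and bounds: "\<And>a b. a \<in> {x, y, v, w} \<Longrightarrow> b \<in> {x, y, v, w} \<Longrightarrow> a \<noteq> b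
      \<Longrightarrow> r a + r b \<le> gdist E a b \<and> gdist E a b \<le> r a + r b + D"
  shows "hyp_delta E x y v w \<le> D"
  unfolding hyp_delta_eq_half_top_gap
  using assms(1) bounds[of x y] bounds[of v w] bounds[of x v] bounds[of y w] bounds[of x w] bounds[of y v]
  by (intro half_top_gap_le_of_interval[where R = "real (r x + r y + r v + r w)"]) auto

lemma gdist_le_Max_gdist_pairs:
  assumes "finite C" "c \<in> C" "c' \<in> C"
  shows "gdist E c c' \<le> Max {gdist E c c' | c c'. c \<in> C \<and> c' \<in> C}"
proof (rule Max_ge)
  show "finite {gdist E c c' | c c'. c \<in> C \<and> c' \<in> C}"
    using finite_image_set2[of "\<lambda>c. c \<in> C" "\<lambda>c. c \<in> C"] assms(1) by simp
qed (use assms in blast)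

theorem proposition2:
  fixes V :: "'a set" and E :: "'a \<Rightarrow> 'a \<Rightarrow> bool" and x y v w :: 'a and C :: "'a set"
  assumes "is_graph V E" and "connected_graph V E"
    and "x \<in> V" "y \<in> V" "v \<in> V" "w \<in> V"
    and "C \<subseteq> V" and "C \<noteq> {}"
    and "\<forall>a\<in>{x, y, v, w}. \<forall>b\<in>{x, y, v, w}. a \<noteq> b \<longrightarrow> (\<forall>p. shortest_path E a b p \<longrightarrow> (\<exists>c\<in>C. c \<in> set p))"
  shows "hyp_delta E x y v w \<le> real (Max {gdist E c c' | c c'. c \<in> C \<and> c' \<in> C})"
proof (cases "distinct [x, y, v, w]")
  case True
  define D where "D = Max {gdist E c c' | c c'. c \<in> C \<and> c' \<in> C}"
  have finite_C: "finite C"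
    using assms(1,7) finite_subset by (auto simp: is_graph_def)
  have diam: "\<forall>c\<in>C. \<forall>c'\<in>C. gdist E c c' \<le> D"
    unfolding D_def using gdist_le_Max_gdist_pairs[OF finite_C] by blast
  have "gdist_set E a C + gdist_set E b C \<le> gdist E a b \<and> gdist E a b \<le> gdist_set E a C + gdist_set E b C + D"
    if ab: "a \<in> {x, y, v, w}" "b \<in> {x, y, v, w}" "a \<noteq> b" for a b
  proof
    have "a \<in> V" "b \<in> V"
      using ab assms(3-6) by auto
    moreover have "\<forall>q. shortest_path E a b q \<longrightarrow> (\<exists>c\<in>C. c \<in> set q)"
      using assms(9) ab by blast
    ultimately show "gdist_set E a C + gdist_set E b C \<le> gdist E a b"
      using gdist_set_add_le_gdist[OF is_graph_symp[OF assms(1)] finite_C] connected_graph_path[OF assms(2)]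
      by metis
    show "gdist E a b \<le> gdist_set E a C + gdist_set E b C + D"
      using gdist_le_gdist_set_add[OF assms(1,2,7) finite_C assms(8) \<open>a \<in> V\<close> \<open>b \<in> V\<close> diam] .
  qed
  then have "hyp_delta E x y v w \<le> real D"
    by (intro hyp_delta_le_if_distinct[OF True, where r = "\<lambda>a. gdist_set E a C"])
  then show ?thesis
    unfolding D_def .
next
  case False
  then show ?thesis
    using hyp_delta_nonpos_if_not_distinct[OF assms(1-6)] by simp
qed

end
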